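(* The dimension of $(I_{W_d})_2$ is $d-3$.
   Context: Let $P_d$ be a convex polygon with $d\ge 4$ vertices $v_1,\dots,v_d$ over a field $\mathbb{K}$ with no three edge lines concurrent. With ${\bf v}_i=(v_i,1)$, $\alpha_j=|{\bf v}_{j-1}\,{\bf v}_j\,{\bf v}_{j+1}|$, $\ell_j=|{\bf v}_j\,{\bf v}_{j+1}\,{\bf p}|$, ${\bf p}=(x,y,z)$, $b_i=\alpha_i\prod_{j\ne i-1,i}\ell_j$, the Wachspress surface $W_d$ is the closure of the image of $p\mapsto(b_1,\dots,b_d)$, and $(I_{W_d})_2$ is the space of quadrics in $S=\mathbb{K}[x_1,\ldots,x_d]$ vanishing on it. *)

theory Defs
  imports Main "HOL.Vector_Spaces" "HOL-Library.Function_Algebras"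
begin

text \<open>Vertices of the polygon are v 0, ..., v (d-1); indices are read cyclically mod d.
  Points of the projective plane are triples (x,y,z) over the ordered field 'a.\<close>

definition det3 :: "'a::comm_ring_1 \<times> 'a \<times> 'a \<Rightarrow> 'a \<times> 'a \<times> 'a \<Rightarrow> 'a \<times> 'a \<times> 'a \<Rightarrow> 'a" where
  "det3 u w t = (case u of (a1,a2,a3) \<Rightarrow> case w of (b1,b2,b3) \<Rightarrow> case t of (c1,c2,c3) \<Rightarrow>
      a1*(b2*c3 - b3*c2) - a2*(b1*c3 - b3*c1) + a3*(b1*c2 - b2*c1))"

definition vbold :: "(nat \<Rightarrow> 'a \<times> 'a) \<Rightarrow> nat \<Rightarrow> nat \<Rightarrow> 'a::comm_ring_1 \<times> 'a \<times> 'a" where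
  "vbold v d i = (fst (v (i mod d)), snd (v (i mod d)), 1)"

definition walpha :: "(nat \<Rightarrow> 'a \<times> 'a) \<Rightarrow> nat \<Rightarrow> nat \<Rightarrow> 'a::comm_ring_1" where
  "walpha v d j = det3 (vbold v d (j + d - 1)) (vbold v d j) (vbold v d (j + 1))"

definition well :: "(nat \<Rightarrow> 'a \<times> 'a) \<Rightarrow> nat \<Rightarrow> nat \<Rightarrow> 'a \<times> 'a \<times> 'a \<Rightarrow> 'a::comm_ring_1" where
  "well v d j p = det3 (vbold v d j) (vbold v d (j + 1)) p"

definition wb :: "(nat \<Rightarrow> 'a \<times> 'a) \<Rightarrow> nat \<Rightarrow> nat \<Rightarrow> 'a \<times> 'a \<times> 'a \<Rightarrow> 'a::comm_ring_1" where
  "wb v d i p = walpha v d i * (\<Prod>j \<in> {0..<d} - {(i + d - 1) mod d, i mod d}. well v d j p)"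

definition convex_polygon :: "(nat \<Rightarrow> 'a::linordered_field \<times> 'a) \<Rightarrow> nat \<Rightarrow> bool" where
  "convex_polygon v d \<longleftrightarrow> 3 \<le> d \<and>
     ((\<forall>j<d. \<forall>k<d. k \<noteq> j \<and> k \<noteq> (j + 1) mod d \<longrightarrow> well v d j (vbold v d k) > 0) \<or>
      (\<forall>j<d. \<forall>k<d. k \<noteq> j \<and> k \<noteq> (j + 1) mod d \<longrightarrow> well v d j (vbold v d k) < 0))"

text \<open>No three edge lines are concurrent (in the projective plane): three distinct edge
  forms have no common nonzero zero.\<close>
definition no_three_concurrent :: "(nat \<Rightarrow> 'a::comm_ring_1 \<times> 'a) \<Rightarrow> nat \<Rightarrow> bool" where
  "no_three_concurrent v d \<longleftrightarrow>
     (\<forall>i<d. \<forall>j<d. \<forall>k<d. i \<noteq> j \<and> j \<noteq> k \<and> i \<noteq> k \<longrightarrow>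
        (\<forall>p::'a \<times> 'a \<times> 'a. well v d i p = 0 \<and> well v d j p = 0 \<and> well v d k p = 0 \<longrightarrow> p = (0,0,0)))"

text \<open>A quadric in x_0..x_{d-1} is given by its coefficients Q(i,j), i \<le> j < d
  (coefficient of x_i x_j); all other entries are 0.\<close>
definition quad_eval :: "nat \<Rightarrow> (nat \<times> nat \<Rightarrow> 'a) \<Rightarrow> (nat \<Rightarrow> 'a) \<Rightarrow> 'a::comm_ring_1" where
  "quad_eval d Q X = (\<Sum>(i,j) \<in> {(i,j). i \<le> j \<and> j < d}. Q (i,j) * X i * X j)"

definition quadric :: "nat \<Rightarrow> (nat \<times> nat \<Rightarrow> 'a::zero) \<Rightarrow> bool" where
  "quadric d Q \<longleftrightarrow> (\<forall>i j. \<not> (i \<le> j \<and> j < d) \<longrightarrow> Q (i,j) = 0)"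

text \<open>(I_{W_d})_2: quadrics vanishing on the image of p \<mapsto> (b_1(p),...,b_d(p))
  (equivalently on its Zariski closure).\<close>
definition IW2 :: "(nat \<Rightarrow> 'a \<times> 'a) \<Rightarrow> nat \<Rightarrow> (nat \<times> nat \<Rightarrow> 'a::comm_ring_1) set" where
  "IW2 v d = {Q. quadric d Q \<and> (\<forall>p. quad_eval d Q (\<lambda>i. wb v d i p) = 0)}"

definition coeff_scale :: "'a::times \<Rightarrow> (nat \<times> nat \<Rightarrow> 'a) \<Rightarrow> (nat \<times> nat \<Rightarrow> 'a)" where
  "coeff_scale c Q = (\<lambda>ij. c * Q ij)"

end

theory Submission
  imports Defs "HOL-Computational_Algebra.Polynomial" "HOL-Library.Product_Plus"
    "HOL-Library.Product_Lexorder"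
begin

text \<open>Evaluating a quadric Q of the ideal at a vertex, where only one b_i is nonzero, and at an
  edge midpoint, where only two are, shows that Q is supported on the diagonals (i,k) of the
  polygon. For a diagonal, b_i b_k = \<alpha>_i \<alpha>_k L m_(i,k), where L is the product of all d edge
  forms and m_(i,k) the product of the d-4 edge forms not incident to vertex i or k. Since no
  edge form vanishes at the centroid, L can be cancelled: Q lies in the ideal iff
  \<Sum> Q_(i,k) \<alpha>_i \<alpha>_k m_(i,k) = 0. The forms m_(i,k) of the diagonals avoiding vertex 0 are
  linearly independent, and there are as many of them as monomials of degree d-4 in three
  variables, so they are a basis of the forms of that degree. Expanding in this basis the form
  m_(0,k) of each of the d-3 diagonals from vertex 0 yields one basis element of the ideal.\<close>

lemma sum_apply: "(\<Sum>x\<in>A. f x) y = (\<Sum>x\<in>A. f x y)"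
  by (induct A rule: infinite_finite_induct) auto

definition scale3 :: "'a::times \<Rightarrow> 'a \<times> 'a \<times> 'a \<Rightarrow> 'a \<times> 'a \<times> 'a" where
  "scale3 t p = (t * fst p, t * fst (snd p), t * snd (snd p))"

definition linear_form3 :: "('a::comm_ring_1 \<times> 'a \<times> 'a \<Rightarrow> 'a) \<Rightarrow> bool" where
  "linear_form3 f \<longleftrightarrow> (\<exists>a b c. \<forall>x y z. f (x,y,z) = a * x + b * y + c * z)"

lemma linear_form3_det3: "linear_form3 (det3 u w)"
proof -
  obtain u1 u2 u3 w1 w2 w3 where "u = (u1,u2,u3)" "w = (w1,w2,w3)" by (cases u, cases w)
  then show ?thesis unfolding linear_form3_def
    by (intro exI[of _ "u2*w3 - u3*w2"] exI[of _ "u3*w1 - u1*w3"] exI[of _ "u1*w2 - u2*w1"])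
      (simp add: det3_def algebra_simps)
qed

lemma linear_form3_coeffs:
  "linear_form3 f \<Longrightarrow> f (x,y,z) = f (1,0,0) * x + f (0,1,0) * y + f (0,0,1) * z"
  unfolding linear_form3_def by auto

lemma linear_form3_add: "linear_form3 f \<Longrightarrow> f (p + q) = f p + f q"
  unfolding linear_form3_def by (cases p; cases q) (auto simp: algebra_simps)

lemma linear_form3_scale3: "linear_form3 f \<Longrightarrow> f (scale3 t p) = t * f p"
  unfolding linear_form3_def scale3_def by (cases p) (auto simp: algebra_simps)

lemma linear_form3_zero: "linear_form3 f \<Longrightarrow> f 0 = 0"
  unfolding linear_form3_def zero_prod_def by auto

lemma linear_form3_sum: "linear_form3 f \<Longrightarrow> f (\<Sum>k\<in>A. u k) = (\<Sum>k\<in>A. f (u k))"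
  by (induct A rule: infinite_finite_induct) (auto simp: linear_form3_zero linear_form3_add)

lemma linear_forms3_common_zero:
  fixes f g :: "'a::field \<times> 'a \<times> 'a \<Rightarrow> 'a"
  assumes f: "linear_form3 f" and g: "linear_form3 g"
  shows "\<exists>q. q \<noteq> 0 \<and> f q = 0 \<and> g q = 0"
proof -
  obtain a1 a2 a3 b1 b2 b3 where fe: "\<And>x y z. f (x,y,z) = a1 * x + a2 * y + a3 * z"
    and ge: "\<And>x y z. g (x,y,z) = b1 * x + b2 * y + b3 * z"
    using f g unfolding linear_form3_def by metis
  \<comment> \<open>the cross product of the coefficient vectors, unless it vanishes\<close>
  consider "(a2*b3 - a3*b2, a3*b1 - a1*b3, a1*b2 - a2*b1) \<noteq> 0"
    | "a2*b3 = a3*b2" "a3*b1 = a1*b3" "a1*b2 = a2*b1"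
    by (fastforce simp: zero_prod_def)
  then show ?thesis
  proof cases
    case 1
    then show ?thesis
      by (intro exI[of _ "(a2*b3 - a3*b2, a3*b1 - a1*b3, a1*b2 - a2*b1)"]) (simp add: fe ge algebra_simps)
  next
    case 2
    consider "a2 \<noteq> 0 \<or> a3 \<noteq> 0" | "a1 \<noteq> 0" "a2 = 0" "a3 = 0" | "a1 = 0" "a2 = 0" "a3 = 0"
      by blast
    then show ?thesis
    proof cases
      case 1
      then show ?thesis using 2
        by (intro exI[of _ "(0, -a3, a2)"]) (auto simp: fe ge zero_prod_def algebra_simps)
    next
      case 2
      then show ?thesis using \<open>a3*b1 = a1*b3\<close>
        by (intro exI[of _ "(0, 0, -a1)"]) (auto simp: fe ge zero_prod_def algebra_simps)
    next
      case 3
      show ?thesis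
      proof (cases "b2 = 0 \<and> b3 = 0")
        case True
        then show ?thesis using 3 by (intro exI[of _ "(0, 1, 0)"]) (auto simp: fe ge zero_prod_def)
      next
        case False
        then show ?thesis using 3
          by (intro exI[of _ "(0, -b3, b2)"]) (auto simp: fe ge zero_prod_def algebra_simps)
      qed
    qed
  qed
qed

definition scale_fun :: "'a::times \<Rightarrow> ('b \<Rightarrow> 'a) \<Rightarrow> 'b \<Rightarrow> 'a" where
  "scale_fun c f = (\<lambda>p. c * f p)"

interpretation FS: vector_space "scale_fun :: 'a::field \<Rightarrow> ('b \<Rightarrow> 'a) \<Rightarrow> _"
  by unfold_locales (auto simp: scale_fun_def fun_eq_iff algebra_simps)

interpretation CS: vector_space "coeff_scale :: 'a::field \<Rightarrow> (nat \<times> nat \<Rightarrow> 'a) \<Rightarrow> _"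
  by unfold_locales (auto simp: coeff_scale_def fun_eq_iff algebra_simps)

definition monomial3 :: "nat \<Rightarrow> nat \<times> nat \<Rightarrow> 'a::field \<times> 'a \<times> 'a \<Rightarrow> 'a" where
  "monomial3 n ab = (\<lambda>(x,y,z). x ^ fst ab * y ^ snd ab * z ^ (n - fst ab - snd ab))"

definition monomial_exponents :: "nat \<Rightarrow> (nat \<times> nat) set" where
  "monomial_exponents n = {(a,b). a + b \<le> n}"

definition homogeneous_forms :: "nat \<Rightarrow> ('a::field \<times> 'a \<times> 'a \<Rightarrow> 'a) set" where
  "homogeneous_forms n = FS.span (monomial3 n ` monomial_exponents n)"

lemma finite_monomial_exponents: "finite (monomial_exponents n)"
  by (rule finite_subset[of _ "{..n} \<times> {..n}"]) (auto simp: monomial_exponents_def)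

lemma monomial_in_homogeneous_forms:
  "a + b \<le> n \<Longrightarrow> monomial3 n (a,b) \<in> homogeneous_forms n"
  unfolding homogeneous_forms_def by (intro FS.span_base) (auto simp: monomial_exponents_def)

lemma linear_form3_times_monomial:
  fixes g :: "'a::field \<times> 'a \<times> 'a \<Rightarrow> 'a"
  assumes g: "linear_form3 g" and ab: "a + b \<le> n"
  shows "(\<lambda>p. g p * monomial3 n (a,b) p) =
    scale_fun (g (1,0,0)) (monomial3 (Suc n) (Suc a, b)) +
    (scale_fun (g (0,1,0)) (monomial3 (Suc n) (a, Suc b)) + scale_fun (g (0,0,1)) (monomial3 (Suc n) (a, b)))"
proof
  fix p :: "'a \<times> 'a \<times> 'a"
  obtain x y z where p: "p = (x,y,z)" by (cases p)
  have "Suc n - (a + b) = Suc (n - (a + b))" using ab by simp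
  moreover have "g p = g (1,0,0) * x + g (0,1,0) * y + g (0,0,1) * z"
    unfolding p by (rule linear_form3_coeffs[OF g])
  ultimately show "g p * monomial3 n (a,b) p = (scale_fun (g (1,0,0)) (monomial3 (Suc n) (Suc a, b)) +
    (scale_fun (g (0,1,0)) (monomial3 (Suc n) (a, Suc b)) + scale_fun (g (0,0,1)) (monomial3 (Suc n) (a, b)))) p"
    by (simp add: p monomial3_def scale_fun_def algebra_simps)
qed

lemma linear_form3_times_homogeneous:
  fixes g :: "'a::field \<times> 'a \<times> 'a \<Rightarrow> 'a"
  assumes g: "linear_form3 g" and f: "f \<in> homogeneous_forms n"
  shows "(\<lambda>p. g p * f p) \<in> homogeneous_forms (Suc n)"
proof -
  have mono: "(\<lambda>p. g p * m p) \<in> homogeneous_forms (Suc n)"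
    if "m \<in> monomial3 n ` monomial_exponents n" for m
  proof -
    from that obtain a b where ab: "a + b \<le> n" and m: "m = monomial3 n (a,b)"
      by (auto simp: monomial_exponents_def)
    have "monomial3 (Suc n) (Suc a, b) \<in> homogeneous_forms (Suc n)"
      "monomial3 (Suc n) (a, Suc b) \<in> homogeneous_forms (Suc n)"
      "monomial3 (Suc n) (a, b) \<in> homogeneous_forms (Suc n)"
      using ab by (auto intro: monomial_in_homogeneous_forms)
    then show ?thesis
      unfolding m linear_form3_times_monomial[OF g ab] homogeneous_forms_def
      by (intro FS.span_add FS.span_scale)
  qed
  from f[unfolded homogeneous_forms_def] show ?thesis
  proof (induct rule: FS.span_induct_alt)
    case base
    then show ?case by (simp add: homogeneous_forms_def zero_fun_def[symmetric] FS.span_zero)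
  next
    case (step c m h)
    have "(\<lambda>p. g p * (scale_fun c m + h) p) = scale_fun c (\<lambda>p. g p * m p) + (\<lambda>p. g p * h p)"
      by (simp add: fun_eq_iff scale_fun_def algebra_simps)
    then show ?case using mono[OF step(1)] step(2) unfolding homogeneous_forms_def
      by (simp only:) (intro FS.span_add FS.span_scale)
  qed
qed

lemma prod_linear_forms3_homogeneous:
  fixes l :: "'j \<Rightarrow> 'a::field \<times> 'a \<times> 'a \<Rightarrow> 'a"
  assumes "finite A" and "\<And>j. j \<in> A \<Longrightarrow> linear_form3 (l j)"
  shows "(\<lambda>p. \<Prod>j\<in>A. l j p) \<in> homogeneous_forms (card A)"
  using assms
proof (induct A rule: finite_induct)
  case empty
  have "(\<lambda>p. \<Prod>j\<in>{}. l j p) = monomial3 0 (0,0)" by (simp add: fun_eq_iff monomial3_def)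
  then show ?case using monomial_in_homogeneous_forms[of 0 0 0] by simp
next
  case (insert j A)
  have "(\<lambda>p. l j p * (\<Prod>j\<in>A. l j p)) \<in> homogeneous_forms (Suc (card A))"
    using insert by (intro linear_form3_times_homogeneous) auto
  then show ?case using insert(1,2) by simp
qed

lemma homogeneous_forms_subset_span:
  fixes B :: "('a::field \<times> 'a \<times> 'a \<Rightarrow> 'a) set"
  assumes sub: "B \<subseteq> homogeneous_forms n" and indep: "FS.independent B"
    and card: "card (monomial_exponents n) \<le> card B"
  shows "homogeneous_forms n \<subseteq> FS.span B"
proof -
  obtain C where C: "B \<subseteq> C" "C \<subseteq> homogeneous_forms n" "FS.independent C"
    "homogeneous_forms n \<subseteq> FS.span C"
    using FS.maximal_independent_subset_extend[OF sub indep] by blast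
  let ?M = "monomial3 n ` monomial_exponents n :: ('a \<times> 'a \<times> 'a \<Rightarrow> 'a) set"
  have "C \<subseteq> FS.span ?M" using C(2) unfolding homogeneous_forms_def .
  then have "finite C" "card C \<le> card ?M"
    using FS.independent_span_bound[OF finite_imageI[OF finite_monomial_exponents] C(3)] by blast+
  moreover have "card ?M \<le> card B"
    using card_image_le[OF finite_monomial_exponents] card by (rule order_trans)
  ultimately have "card C = card B"
    using card_mono[OF _ C(1)] by linarith
  then have "B = C" using card_subset_eq[OF \<open>finite C\<close> C(1)] by simp
  then show ?thesis using C(4) by simp
qed

text \<open>A product of linear forms that are nonzero at some point w restricts to a nonzero
  polynomial on every line in direction w, so it can be cancelled from an identity between
  polynomial functions.\<close>
lemma cancel_prod_linear_forms3:
  fixes l :: "'j \<Rightarrow> 'a::field_char_0 \<times> 'a \<times> 'a \<Rightarrow> 'a"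
  assumes lin: "\<And>j. linear_form3 (l j)" and J: "finite J" and w: "\<And>j. j \<in> J \<Longrightarrow> l j w \<noteq> 0"
    and vanish: "\<And>p. (\<Prod>j\<in>J. l j p) * (\<Sum>x\<in>X. c x * (\<Prod>j\<in>K x. l j p)) = 0"
  shows "(\<Sum>x\<in>X. c x * (\<Prod>j\<in>K x. l j p)) = 0"
proof -
  define line where "line j = [:l j p, l j w:]" for j
  have line: "poly (line j) t = l j (p + scale3 t w)" for j t
    using lin by (simp add: line_def linear_form3_add linear_form3_scale3)
  define g where "g = (\<Sum>x\<in>X. smult (c x) (\<Prod>j\<in>K x. line j))"
  have g: "poly g t = (\<Sum>x\<in>X. c x * (\<Prod>j\<in>K x. l j (p + scale3 t w)))" for t
    by (simp add: g_def poly_sum poly_prod line)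
  have "(\<Prod>j\<in>J. line j) * g = 0"
    by (rule poly_ext) (simp add: vanish g poly_prod line)
  moreover have "(\<Prod>j\<in>J. line j) \<noteq> 0" using J w by (simp add: line_def)
  ultimately have "g = 0" by simp
  moreover have "p + scale3 0 w = p" by (simp add: scale3_def zero_prod_def)
  ultimately show ?thesis using g[of 0] by simp
qed

lemma linear_form3_well: "linear_form3 (well v d j)"
  using linear_form3_det3 by (simp add: well_def[abs_def])

lemma well_vbold_left: "well v d j (vbold v d j) = 0"
  by (cases "vbold v d j") (simp add: well_def det3_def algebra_simps)

lemma well_vbold_right: "well v d j (vbold v d (j + 1)) = 0"
  by (cases "vbold v d j"; cases "vbold v d (j + 1)") (simp add: well_def det3_def algebra_simps)

lemma vbold_mod: "vbold v d (i mod d) = vbold v d i"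
  by (simp add: vbold_def)

lemma well_mod: "well v d (j mod d) = well v d j"
proof -
  have "vbold v d (j mod d + 1) = vbold v d (j + 1)"
    by (simp add: vbold_def mod_Suc_eq)
  then show ?thesis by (simp add: well_def vbold_mod fun_eq_iff)
qed

lemma finite_quad_eval_index: "finite {(i, j). i \<le> j \<and> j < (d::nat)}"
  by (rule finite_subset[of _ "{..<d} \<times> {..<d}"]) auto

lemma quad_eval_eq_single:
  assumes "a \<le> b" "b < d"
    and "\<And>i j. i \<le> j \<Longrightarrow> j < d \<Longrightarrow> (i,j) \<noteq> (a,b) \<Longrightarrow> Q (i,j) * X i * X j = 0"
  shows "quad_eval d Q X = Q (a,b) * X a * X b"
proof -
  have "quad_eval d Q X = (\<Sum>(i,j)\<in>{(a,b)}. Q (i,j) * X i * X j)"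
    unfolding quad_eval_def
    by (rule sum.mono_neutral_right) (use finite_quad_eval_index assms in auto)
  then show ?thesis by simp
qed

lemma IW2_quad_eval_wb: "Q \<in> IW2 v d \<Longrightarrow> quad_eval d Q (\<lambda>i. wb v d i p) = 0"
  unfolding IW2_def by blast

lemma IW2_subspace: "CS.subspace (IW2 v d :: (nat \<times> nat \<Rightarrow> 'a::field) set)"
proof -
  have lin: "quad_eval d 0 X = 0" "quad_eval d (Q + R) X = quad_eval d Q X + quad_eval d R X"
    "quad_eval d (coeff_scale c Q) X = c * quad_eval d Q X" for Q R :: "nat \<times> nat \<Rightarrow> 'a" and X c
    by (simp_all add: quad_eval_def coeff_scale_def case_prod_beta sum.distrib sum_distrib_left
        algebra_simps)
  show ?thesis
    by (auto simp: CS.subspace_def IW2_def quadric_def lin) (auto simp: coeff_scale_def)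
qed

locale wachspress_polygon =
  fixes v :: "nat \<Rightarrow> 'a::linordered_field \<times> 'a" and d :: nat
  assumes four_le: "4 \<le> d" and convex: "convex_polygon v d" and no_concurrent: "no_three_concurrent v d"
begin

abbreviation V :: "nat \<Rightarrow> 'a \<times> 'a \<times> 'a" where "V k \<equiv> vbold v d k"
abbreviation l :: "nat \<Rightarrow> 'a \<times> 'a \<times> 'a \<Rightarrow> 'a" where "l j \<equiv> well v d j"

definition nxt :: "nat \<Rightarrow> nat" where "nxt i = (if i = d - 1 then 0 else Suc i)"
definition prv :: "nat \<Rightarrow> nat" where "prv i = (if i = 0 then d - 1 else i - 1)"

lemma Suc_mod_eq_nxt: "i < d \<Longrightarrow> Suc i mod d = nxt i"
  using four_le by (auto simp: nxt_def)

lemma pred_mod_eq_prv: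
  assumes "i < d" shows "(i + d - 1) mod d = prv i"
proof (cases "i = 0")
  case False
  then have "i + d - 1 = (i - 1) + d" by linarith
  then have "(i + d - 1) mod d = (i - 1) mod d" by simp
  then show ?thesis using False assms by (simp add: prv_def)
qed (use four_le in \<open>simp add: prv_def\<close>)

lemma nxt_less: "i < d \<Longrightarrow> nxt i < d" and prv_less: "i < d \<Longrightarrow> prv i < d"
  using four_le by (auto simp: nxt_def prv_def)

lemma nxt_eq_iff: "j < d \<Longrightarrow> m < d \<Longrightarrow> nxt j = m \<longleftrightarrow> j = prv m"
  using four_le by (auto simp: nxt_def prv_def)

lemma prv_nxt: "m < d \<Longrightarrow> prv (nxt m) = m"
  using nxt_eq_iff nxt_less by metis

lemma prv_eq_iff: "i < d \<Longrightarrow> m < d \<Longrightarrow> prv i = prv m \<longleftrightarrow> i = m"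
  using four_le by (auto simp: prv_def)

lemma prv_neq: "i < d \<Longrightarrow> prv i \<noteq> i" and prv_prv_neq: "i < d \<Longrightarrow> prv (prv i) \<noteq> i"
  and nxt_neq: "i < d \<Longrightarrow> nxt i \<noteq> i" and prv_neq_nxt: "i < d \<Longrightarrow> prv i \<noteq> nxt i"
  using four_le by (auto simp: prv_def nxt_def)

definition orientation :: 'a where
  "orientation = (if \<forall>j<d. \<forall>k<d. k \<noteq> j \<and> k \<noteq> (j + 1) mod d \<longrightarrow> l j (V k) > 0 then 1 else -1)"

lemma orientation_nonzero: "orientation \<noteq> 0"
  by (simp add: orientation_def)

lemma orientation_well_pos:
  "j < d \<Longrightarrow> k < d \<Longrightarrow> k \<noteq> j \<Longrightarrow> k \<noteq> nxt j \<Longrightarrow> 0 < orientation * l j (V k)"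
  using convex Suc_mod_eq_nxt unfolding convex_polygon_def orientation_def by auto

lemma well_vertex_eq_0_iff: "j < d \<Longrightarrow> k < d \<Longrightarrow> l j (V k) = 0 \<longleftrightarrow> j = k \<or> j = prv k"
proof -
  assume j: "j < d" and k: "k < d"
  have "V (nxt j) = V (j + 1)" using vbold_mod[of v d "j + 1"] Suc_mod_eq_nxt[OF j] by simp
  then have "l j (V k) = 0" if "k = j \<or> k = nxt j"
    using that well_vbold_left well_vbold_right by metis
  then show ?thesis
    using orientation_well_pos[OF j k] nxt_eq_iff[OF j k] by force
qed

lemma well_vertex_sign: "j < d \<Longrightarrow> k < d \<Longrightarrow> 0 \<le> orientation * l j (V k)"
  using well_vertex_eq_0_iff orientation_well_pos nxt_eq_iff
  by (metis less_imp_le mult_zero_right order.refl)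

lemma walpha_nonzero: "i < d \<Longrightarrow> walpha v d i \<noteq> 0"
proof -
  assume i: "i < d"
  have "V (i + d - 1 + 1) = V i" using i four_le by (simp add: vbold_def)
  then have "walpha v d i = l ((i + d - 1) mod d) (V ((i + 1) mod d))"
    by (simp add: walpha_def well_def well_mod vbold_mod)
  also have "\<dots> = l (prv i) (V (nxt i))"
    using pred_mod_eq_prv[OF i] Suc_mod_eq_nxt[OF i] by simp
  finally show ?thesis
    using well_vertex_eq_0_iff[OF prv_less nxt_less] prv_nxt prv_neq_nxt prv_neq i by metis
qed

lemma wb_eq:
  assumes "i < d" shows "wb v d i p = walpha v d i * (\<Prod>j\<in>{0..<d} - {prv i, i}. l j p)"
  unfolding wb_def pred_mod_eq_prv[OF assms] using assms by simp

lemma wb_eq_0_iff: "i < d \<Longrightarrow> wb v d i p = 0 \<longleftrightarrow> (\<exists>j<d. j \<noteq> prv i \<and> j \<noteq> i \<and> l j p = 0)"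
  using walpha_nonzero by (auto simp: wb_eq)

lemma wb_vertex_eq_0_iff: "i < d \<Longrightarrow> m < d \<Longrightarrow> wb v d i (V m) = 0 \<longleftrightarrow> i \<noteq> m"
proof -
  assume i: "i < d" and m: "m < d"
  have "\<exists>j<d. j \<noteq> prv i \<and> j \<noteq> i \<and> (j = m \<or> j = prv m) \<longleftrightarrow> i \<noteq> m"
    using prv_eq_iff[OF i m] prv_prv_neq[OF i] prv_less[OF m] m by metis
  then show ?thesis using wb_eq_0_iff[OF i] well_vertex_eq_0_iff[OF _ m] by auto
qed

text \<open>Twice the midpoint of the edge from vertex m to vertex m+1, in homogeneous coordinates.\<close>
definition edge_point :: "nat \<Rightarrow> 'a \<times> 'a \<times> 'a" where "edge_point m = V m + V (nxt m)"

lemma well_edge_point_eq_0_iff: "j < d \<Longrightarrow> m < d \<Longrightarrow> l j (edge_point m) = 0 \<longleftrightarrow> j = m"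
proof -
  assume j: "j < d" and m: "m < d"
  have sum: "orientation * l j (edge_point m) = orientation * l j (V m) + orientation * l j (V (nxt m))"
    by (simp add: edge_point_def linear_form3_add[OF linear_form3_well] algebra_simps)
  have "l j (edge_point m) = 0 \<longleftrightarrow> l j (V m) = 0 \<and> l j (V (nxt m)) = 0"
    using sum well_vertex_sign[OF j m] well_vertex_sign[OF j nxt_less[OF m]] orientation_nonzero
    by (auto simp: add_nonneg_eq_0_iff)
  also have "\<dots> \<longleftrightarrow> j = m"
    using well_vertex_eq_0_iff[OF j m] well_vertex_eq_0_iff[OF j nxt_less[OF m]] prv_nxt[OF m]
      prv_neq_nxt[OF m] by auto
  finally show ?thesis .
qed

lemma wb_edge_point_eq_0_iff:
  "i < d \<Longrightarrow> m < d \<Longrightarrow> wb v d i (edge_point m) = 0 \<longleftrightarrow> i \<noteq> m \<and> i \<noteq> nxt m"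
  using wb_eq_0_iff well_edge_point_eq_0_iff nxt_eq_iff by (metis nxt_less)

lemma IW2_square_coeff: "Q \<in> IW2 v d \<Longrightarrow> m < d \<Longrightarrow> Q (m,m) = 0"
proof -
  assume Q: "Q \<in> IW2 v d" and m: "m < d"
  have "0 = quad_eval d Q (\<lambda>i. wb v d i (V m))" using IW2_quad_eval_wb[OF Q] by simp
  also have "\<dots> = Q (m,m) * wb v d m (V m) * wb v d m (V m)"
    by (rule quad_eval_eq_single) (use m wb_vertex_eq_0_iff in auto)
  finally show ?thesis using wb_vertex_eq_0_iff[OF m m] by simp
qed

lemma IW2_edge_coeff: "Q \<in> IW2 v d \<Longrightarrow> m < d \<Longrightarrow> Q (min m (nxt m), max m (nxt m)) = 0"
proof -
  assume Q: "Q \<in> IW2 v d" and m: "m < d"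
  define n where "n = nxt m"
  have n: "n < d" "n \<noteq> m" using nxt_less nxt_neq m n_def by auto
  have "0 = quad_eval d Q (\<lambda>i. wb v d i (edge_point m))" using IW2_quad_eval_wb[OF Q] by simp
  also have "\<dots> = Q (min m n, max m n) * wb v d (min m n) (edge_point m) * wb v d (max m n) (edge_point m)"
  proof (rule quad_eval_eq_single)
    fix i j assume ij: "i \<le> j" "j < d" "(i,j) \<noteq> (min m n, max m n)"
    show "Q (i,j) * wb v d i (edge_point m) * wb v d j (edge_point m) = 0"
    proof (cases "i \<in> {m,n} \<and> j \<in> {m,n}")
      case True
      then have "i = j" using ij n by (cases "m \<le> n") (auto simp: min_def max_def)
      then show ?thesis using IW2_square_coeff[OF Q] ij by simp
    next
      case False
      then show ?thesis using wb_edge_point_eq_0_iff ij m by (auto simp: n_def)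
    qed
  qed (use m n in auto)
  finally show ?thesis
    using wb_edge_point_eq_0_iff m n by (auto simp: n_def min_def max_def)
qed

definition diagonals :: "(nat \<times> nat) set" where
  "diagonals = {(i,k). i + 2 \<le> k \<and> k < d \<and> \<not> (i = 0 \<and> k = d - 1)}"

lemma finite_diagonals: "finite diagonals"
  by (rule finite_subset[of _ "{..<d} \<times> {..<d}"]) (auto simp: diagonals_def)

lemma IW2_support: "Q \<in> IW2 v d \<Longrightarrow> x \<notin> diagonals \<Longrightarrow> Q x = 0"
proof -
  assume Q: "Q \<in> IW2 v d" and x: "x \<notin> diagonals"
  obtain i k where x_eq: "x = (i,k)" by (cases x)
  show ?thesis
  proof (cases "i \<le> k \<and> k < d")
    case False
    then show ?thesis using Q by (auto simp: IW2_def quadric_def x_eq)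
  next
    case True
    then consider "i = k" | "k = i + 1" | "i = 0" "k = d - 1"
      using x unfolding x_eq diagonals_def by fastforce
    then show ?thesis
    proof cases
      case 1
      then show ?thesis using IW2_square_coeff Q True x_eq by simp
    next
      case 2
      then have "nxt i = k" using True by (auto simp: nxt_def)
      then show ?thesis using IW2_edge_coeff[OF Q, of i] True 2 x_eq by simp
    next
      case 3
      then have "nxt (d - 1) = 0" by (simp add: nxt_def)
      then show ?thesis using IW2_edge_coeff[OF Q, of "d - 1"] four_le 3 x_eq by simp
    qed
  qed
qed

definition incident_edges :: "nat \<times> nat \<Rightarrow> nat set" where
  "incident_edges x = {prv (fst x), fst x, prv (snd x), snd x}"

definition diagonal_form :: "nat \<times> nat \<Rightarrow> 'a \<times> 'a \<times> 'a \<Rightarrow> 'a" where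
  "diagonal_form x p = (\<Prod>j\<in>{0..<d} - incident_edges x. l j p)"

definition edge_product :: "'a \<times> 'a \<times> 'a \<Rightarrow> 'a" where
  "edge_product p = (\<Prod>j\<in>{0..<d}. l j p)"

definition walpha2 :: "nat \<times> nat \<Rightarrow> 'a" where
  "walpha2 x = walpha v d (fst x) * walpha v d (snd x)"

lemma walpha2_nonzero: "x \<in> diagonals \<Longrightarrow> walpha2 x \<noteq> 0"
  using walpha_nonzero by (auto simp: walpha2_def diagonals_def)

lemma diagonal_edges_disjoint: "(i,k) \<in> diagonals \<Longrightarrow> {prv i, i} \<inter> {prv k, k} = {}"
  using four_le by (auto simp: diagonals_def prv_def)

lemma wb_mult_wb:
  assumes x: "(i,k) \<in> diagonals"
  shows "wb v d i p * wb v d k p = walpha2 (i,k) * (edge_product p * diagonal_form (i,k) p)"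
proof -
  have ik: "i < d" "k < d" using x by (auto simp: diagonals_def)
  define A Ei Ek where "A = {0..<d}" "Ei = {prv i, i}" "Ek = {prv k, k}"
  define f where "f j = l j p" for j
  have fin: "finite A" and sub: "Ei \<subseteq> A" "Ek \<subseteq> A"
    using ik prv_less by (auto simp: A_Ei_Ek_def)
  have disj: "Ei \<inter> Ek = {}" using diagonal_edges_disjoint x by (simp add: A_Ei_Ek_def)
  have "A - Ei - Ek = A - (Ei \<union> Ek)" "A - Ek - Ei = A - (Ei \<union> Ek)" by auto
  moreover have "Ek \<subseteq> A - Ei" "Ei \<subseteq> A - Ek" using sub disj by auto
  ultimately have "prod f (A - Ei) = prod f (A - (Ei \<union> Ek)) * prod f Ek"
    and "prod f (A - Ek) = prod f (A - (Ei \<union> Ek)) * prod f Ei"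
    using prod.subset_diff fin by (metis finite_Diff)+
  moreover have "prod f A = prod f (A - Ei) * prod f Ei"
    using prod.subset_diff[OF sub(1) fin] .
  moreover have "incident_edges (i,k) = Ei \<union> Ek" by (auto simp: incident_edges_def A_Ei_Ek_def)
  ultimately show ?thesis using ik
    by (simp add: wb_eq edge_product_def diagonal_form_def walpha2_def
        A_Ei_Ek_def[symmetric] f_def[abs_def] algebra_simps)
qed

definition reduced_form :: "(nat \<times> nat \<Rightarrow> 'a) \<Rightarrow> 'a \<times> 'a \<times> 'a \<Rightarrow> 'a" where
  "reduced_form Q p = (\<Sum>x\<in>diagonals. (Q x * walpha2 x) * diagonal_form x p)"

lemma quad_eval_wb_eq:
  assumes "\<And>x. x \<notin> diagonals \<Longrightarrow> Q x = 0"
  shows "quad_eval d Q (\<lambda>i. wb v d i p) = edge_product p * reduced_form Q p"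
proof -
  have "quad_eval d Q (\<lambda>i. wb v d i p) = (\<Sum>(i,k)\<in>diagonals. Q (i,k) * wb v d i p * wb v d k p)"
    unfolding quad_eval_def
  proof (rule sum.mono_neutral_right)
    show "diagonals \<subseteq> {(i, j). i \<le> j \<and> j < d}" by (auto simp: diagonals_def)
  qed (use finite_quad_eval_index assms in auto)
  also have "\<dots> = (\<Sum>x\<in>diagonals. edge_product p * ((Q x * walpha2 x) * diagonal_form x p))"
    by (rule sum.cong) (auto simp: wb_mult_wb[simplified mult.assoc] algebra_simps)
  finally show ?thesis by (simp add: reduced_form_def sum_distrib_left)
qed

definition centroid :: "'a \<times> 'a \<times> 'a" where "centroid = (\<Sum>k<d. V k)"

lemma well_centroid_nonzero: "j < d \<Longrightarrow> l j centroid \<noteq> 0"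
proof -
  assume j: "j < d"
  have "orientation * l j centroid = (\<Sum>k<d. orientation * l j (V k))"
    by (simp add: centroid_def linear_form3_sum[OF linear_form3_well] sum_distrib_left)
  also have "\<dots> > 0"
  proof (rule sum_pos2)
    show "nxt (nxt j) \<in> {..<d}" "0 < orientation * l j (V (nxt (nxt j)))"
      using j four_le by (auto intro!: orientation_well_pos simp: nxt_def)
  qed (use j well_vertex_sign in auto)
  finally show ?thesis by auto
qed

lemma IW2_iff: "Q \<in> IW2 v d \<longleftrightarrow> (\<forall>x. x \<notin> diagonals \<longrightarrow> Q x = 0) \<and> (\<forall>p. reduced_form Q p = 0)"
proof
  assume Q: "Q \<in> IW2 v d"
  then have supp: "\<forall>x. x \<notin> diagonals \<longrightarrow> Q x = 0" using IW2_support by blast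
  have "edge_product p * reduced_form Q p = 0" for p
    using quad_eval_wb_eq[of Q p] supp IW2_quad_eval_wb[OF Q] by simp
  then have "reduced_form Q p = 0" for p
    using cancel_prod_linear_forms3[where l=l and J="{0..<d}" and w=centroid
        and c="\<lambda>x. Q x * walpha2 x" and X=diagonals and K="\<lambda>x. {0..<d} - incident_edges x"]
    by (simp add: linear_form3_well well_centroid_nonzero reduced_form_def diagonal_form_def edge_product_def)
  with supp show "(\<forall>x. x \<notin> diagonals \<longrightarrow> Q x = 0) \<and> (\<forall>p. reduced_form Q p = 0)" by blast
next
  assume "(\<forall>x. x \<notin> diagonals \<longrightarrow> Q x = 0) \<and> (\<forall>p. reduced_form Q p = 0)"
  then have supp: "\<And>x. x \<notin> diagonals \<Longrightarrow> Q x = 0" and red: "\<And>p. reduced_form Q p = 0" by blast+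
  have "quadric d Q" unfolding quadric_def using supp by (auto simp: diagonals_def)
  moreover have "quad_eval d Q (\<lambda>i. wb v d i p) = 0" for p
    by (simp add: quad_eval_wb_eq[OF supp] red)
  ultimately show "Q \<in> IW2 v d" by (simp add: IW2_def)
qed

lemma exists_point_on_two_edges:
  assumes "a < d" "b < d" "a \<noteq> b"
  obtains q where "\<And>j. j < d \<Longrightarrow> l j q = 0 \<longleftrightarrow> j = a \<or> j = b"
proof -
  obtain q where q: "q \<noteq> 0" "l a q = 0" "l b q = 0"
    using linear_forms3_common_zero[OF linear_form3_well linear_form3_well] by blast
  have "l j q \<noteq> 0" if "j < d" "j \<noteq> a" "j \<noteq> b" for j
    using no_concurrent q assms that unfolding no_three_concurrent_def zero_prod_def by blast
  then show ?thesis using that q by blast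
qed

lemma diagonal_form_eq_0_iff:
  assumes "\<And>j. j < d \<Longrightarrow> l j q = 0 \<longleftrightarrow> j = a \<or> j = b" "a < d" "b < d"
  shows "diagonal_form x q = 0 \<longleftrightarrow> a \<notin> incident_edges x \<or> b \<notin> incident_edges x"
  using assms by (auto simp: diagonal_form_def)

definition diagonals_at_0 :: "(nat \<times> nat) set" where
  "diagonals_at_0 = {x \<in> diagonals. fst x = 0}"

definition diagonals_off_0 :: "(nat \<times> nat) set" where
  "diagonals_off_0 = {x \<in> diagonals. fst x \<noteq> 0}"

lemma diagonals_off_0_eq: "diagonals_off_0 = {(i,k). 1 \<le> i \<and> i + 2 \<le> k \<and> k < d}"
  by (auto simp: diagonals_off_0_def diagonals_def)

lemma diagonals_at_0_eq: "diagonals_at_0 = (\<lambda>k. (0, k)) ` {2..d - 2}"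
  using four_le by (auto simp: diagonals_at_0_def diagonals_def image_iff)

lemma diagonals_split: "diagonals = diagonals_off_0 \<union> diagonals_at_0"
  and diagonals_split_disjoint: "diagonals_off_0 \<inter> diagonals_at_0 = {}"
  by (auto simp: diagonals_off_0_def diagonals_at_0_def)

lemma finite_diagonals_off_0: "finite diagonals_off_0" and finite_diagonals_at_0: "finite diagonals_at_0"
  using finite_diagonals by (auto simp: diagonals_off_0_def diagonals_at_0_def)

lemma card_diagonals_at_0: "card diagonals_at_0 = d - 3"
  using four_le by (simp add: diagonals_at_0_eq card_image inj_on_def)

lemma card_diagonals_off_0: "card diagonals_off_0 = card (monomial_exponents (d - 4))"
proof (rule bij_betw_same_card[of "\<lambda>(i,k). (i - 1, k - i - 2)"])
  show "bij_betw (\<lambda>(i,k). (i - 1, k - i - 2)) diagonals_off_0 (monomial_exponents (d - 4))"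
    by (rule bij_betw_byWitness[of _ "\<lambda>(a,b). (a + 1, a + b + 3)"])
      (use four_le in \<open>auto simp: diagonals_off_0_eq monomial_exponents_def\<close>)
qed

lemma incident_edges_off_0: "(i,k) \<in> diagonals_off_0 \<Longrightarrow> incident_edges (i,k) = {i - 1, i, k - 1, k}"
  by (simp add: diagonals_off_0_eq incident_edges_def prv_def)

text \<open>Ordering the diagonals off vertex 0 lexicographically, each diagonal form is nonzero at the
  intersection point of the edge lines i-1 and k-1, where all later diagonal forms vanish.\<close>
lemma diagonal_form_separating_point:
  assumes x: "x \<in> diagonals_off_0"
  obtains q where "diagonal_form x q \<noteq> 0"
    and "\<And>y. y \<in> diagonals_off_0 \<Longrightarrow> x < y \<Longrightarrow> diagonal_form y q = 0"
proof -
  obtain i k where x_eq: "x = (i,k)" and ik: "1 \<le> i" "i + 2 \<le> k" "k < d"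
    using x by (auto simp: diagonals_off_0_eq)
  have "i - 1 < d" "k - 1 < d" "i - 1 \<noteq> k - 1" using ik by auto
  then obtain q where q: "\<And>j. j < d \<Longrightarrow> l j q = 0 \<longleftrightarrow> j = i - 1 \<or> j = k - 1"
    using exists_point_on_two_edges by metis
  have zero_iff: "diagonal_form y q = 0 \<longleftrightarrow> i - 1 \<notin> incident_edges y \<or> k - 1 \<notin> incident_edges y" for y
    using diagonal_form_eq_0_iff[OF q] ik by simp
  show ?thesis
  proof (rule that)
    show "diagonal_form x q \<noteq> 0"
      using zero_iff incident_edges_off_0 x by (simp add: x_eq)
  next
    fix y assume y: "y \<in> diagonals_off_0" "x < y"
    obtain i' k' where y_eq: "y = (i',k')" and ik': "1 \<le> i'" "i' + 2 \<le> k'"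
      using y by (auto simp: diagonals_off_0_eq)
    have "i - 1 \<notin> incident_edges y \<or> k - 1 \<notin> incident_edges y"
      using y ik ik' incident_edges_off_0 by (auto simp: x_eq y_eq)
    then show "diagonal_form y q = 0" using zero_iff by blast
  qed
qed

lemma diagonal_forms_off_0_scalars_zero:
  assumes vanish: "\<And>p. (\<Sum>y\<in>diagonals_off_0. c y * diagonal_form y p) = 0"
    and x: "x \<in> diagonals_off_0"
  shows "c x = 0"
proof (rule ccontr)
  assume "c x \<noteq> 0"
  define Z where "Z = {y \<in> diagonals_off_0. c y \<noteq> 0}"
  have "x \<in> Z" using x \<open>c x \<noteq> 0\<close> by (simp add: Z_def)
  moreover have "finite Z" by (simp add: Z_def finite_diagonals_off_0)
  ultimately have Z: "finite Z" "Z \<noteq> {}" by blast+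
  define x0 where "x0 = Min Z"
  have x0: "x0 \<in> diagonals_off_0" "c x0 \<noteq> 0" using Min_in[OF Z] by (auto simp: x0_def Z_def)
  obtain q where q: "diagonal_form x0 q \<noteq> 0"
    and later: "\<And>y. y \<in> diagonals_off_0 \<Longrightarrow> x0 < y \<Longrightarrow> diagonal_form y q = 0"
    using diagonal_form_separating_point[OF x0(1)] by blast
  have "(\<Sum>y\<in>diagonals_off_0. c y * diagonal_form y q) = (\<Sum>y\<in>{x0}. c y * diagonal_form y q)"
  proof (rule sum.mono_neutral_right)
    show "\<forall>y\<in>diagonals_off_0 - {x0}. c y * diagonal_form y q = 0"
    proof
      fix y assume y: "y \<in> diagonals_off_0 - {x0}"
      show "c y * diagonal_form y q = 0"
      proof (cases "c y = 0")
        case False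
        then have "x0 \<le> y" using Min_le[OF Z(1)] y by (auto simp: x0_def Z_def)
        then have "x0 < y" using y by auto
        then show ?thesis using later y by simp
      qed simp
    qed
  qed (use finite_diagonals_off_0 x0 in auto)
  then show False using vanish[of q] q x0 by simp
qed

lemma inj_on_diagonal_form: "inj_on diagonal_form diagonals_off_0"
proof (rule inj_onI, rule ccontr)
  fix x y assume x: "x \<in> diagonals_off_0" and y: "y \<in> diagonals_off_0"
    and eq: "diagonal_form x = diagonal_form y" and "x \<noteq> y"
  show False
  proof (cases "x < y")
    case True
    then show False using diagonal_form_separating_point[OF x] y eq by metis
  next
    case False
    then have "y < x" using \<open>x \<noteq> y\<close> by auto
    then show False using diagonal_form_separating_point[OF y] x eq by metis
  qed
qed

lemma diagonal_forms_off_0_independent: "FS.independent (diagonal_form ` diagonals_off_0)"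
proof (rule FS.independent_if_scalars_zero)
  fix f g assume sum: "(\<Sum>h\<in>diagonal_form ` diagonals_off_0. scale_fun (f h) h) = 0"
    and g: "g \<in> diagonal_form ` diagonals_off_0"
  have "(\<Sum>y\<in>diagonals_off_0. f (diagonal_form y) * diagonal_form y p) = 0" for p
    using fun_cong[OF sum, of p]
    by (simp add: sum.reindex[OF inj_on_diagonal_form] sum_apply scale_fun_def)
  then show "f g = 0" using diagonal_forms_off_0_scalars_zero[of "\<lambda>y. f (diagonal_form y)"] g by auto
qed (use finite_diagonals_off_0 in simp)

lemma diagonal_form_homogeneous: "x \<in> diagonals \<Longrightarrow> diagonal_form x \<in> homogeneous_forms (d - 4)"
proof -
  assume x: "x \<in> diagonals"
  obtain i k where x_eq: "x = (i,k)" and ik: "i < d" "k < d" using x by (auto simp: diagonals_def)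
  have "card (incident_edges x) = 4"
    using diagonal_edges_disjoint[of i k] x prv_neq ik by (simp add: incident_edges_def x_eq)
  moreover have "incident_edges x \<subseteq> {0..<d}" using ik prv_less by (auto simp: incident_edges_def x_eq)
  ultimately have "card ({0..<d} - incident_edges x) = d - 4"
    by (simp add: card_Diff_subset finite_subset)
  then show ?thesis
    using prod_linear_forms3_homogeneous[of "{0..<d} - incident_edges x" l]
    by (simp add: diagonal_form_def[abs_def] linear_form3_well)
qed

lemma homogeneous_forms_span_diagonal_forms:
  "homogeneous_forms (d - 4) \<subseteq> FS.span (diagonal_form ` diagonals_off_0)"
proof (rule homogeneous_forms_subset_span)
  show "diagonal_form ` diagonals_off_0 \<subseteq> homogeneous_forms (d - 4)"
    using diagonal_form_homogeneous by (auto simp: diagonals_off_0_def)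
  show "card (monomial_exponents (d - 4)) \<le> card (diagonal_form ` diagonals_off_0)"
    by (simp add: card_image[OF inj_on_diagonal_form] card_diagonals_off_0)
qed (rule diagonal_forms_off_0_independent)

lemma diagonal_form_expansion:
  assumes "x \<in> diagonals"
  shows "\<exists>r. \<forall>p. diagonal_form x p = (\<Sum>y\<in>diagonals_off_0. r y * diagonal_form y p)"
proof -
  have "diagonal_form x \<in> FS.span (diagonal_form ` diagonals_off_0)"
    using homogeneous_forms_span_diagonal_forms diagonal_form_homogeneous[OF assms] by blast
  then obtain u where "diagonal_form x = (\<Sum>h\<in>diagonal_form ` diagonals_off_0. scale_fun (u h) h)"
    using FS.span_finite[of "diagonal_form ` diagonals_off_0"] finite_diagonals_off_0 by auto
  then have "diagonal_form x p = (\<Sum>y\<in>diagonals_off_0. u (diagonal_form y) * diagonal_form y p)" for p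
    by (simp add: sum.reindex[OF inj_on_diagonal_form] sum_apply scale_fun_def)
  then show ?thesis by (intro exI[of _ "\<lambda>y. u (diagonal_form y)"]) blast
qed

definition expansion_coeffs :: "nat \<times> nat \<Rightarrow> nat \<times> nat \<Rightarrow> 'a" where
  "expansion_coeffs x =
     (SOME r. \<forall>p. diagonal_form x p = (\<Sum>y\<in>diagonals_off_0. r y * diagonal_form y p))"

lemma diagonal_form_eq_expansion:
  "x \<in> diagonals \<Longrightarrow>
    diagonal_form x p = (\<Sum>y\<in>diagonals_off_0. expansion_coeffs x y * diagonal_form y p)"
  using someI_ex[OF diagonal_form_expansion] unfolding expansion_coeffs_def by blast

text \<open>The coefficient 1 at t makes the reduced form contain diagonal_form t, which the
  coefficients on the diagonals off vertex 0 cancel against its expansion.\<close>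
definition IW2_basis :: "nat \<times> nat \<Rightarrow> nat \<times> nat \<Rightarrow> 'a" where
  "IW2_basis t x = (if x = t then 1
     else if x \<in> diagonals_off_0 then - (expansion_coeffs t x * walpha2 t / walpha2 x) else 0)"

lemma IW2_basis_at_0:
  "t \<in> diagonals_at_0 \<Longrightarrow> x \<in> diagonals_at_0 \<Longrightarrow> IW2_basis t x = (if x = t then 1 else 0)"
  using diagonals_split_disjoint by (auto simp: IW2_basis_def)

lemma sum_IW2_basis_at_0:
  assumes t: "t \<in> diagonals_at_0" shows "(\<Sum>s\<in>diagonals_at_0. f s * IW2_basis s t) = f t"
proof -
  have "(\<Sum>s\<in>diagonals_at_0. f s * IW2_basis s t) = (\<Sum>s\<in>diagonals_at_0. if s = t then f s else 0)"
    by (rule sum.cong) (auto simp: IW2_basis_at_0 t)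
  then show ?thesis using t finite_diagonals_at_0 by simp
qed

lemma reduced_form_split:
  "reduced_form Q p = (\<Sum>x\<in>diagonals_off_0. (Q x * walpha2 x) * diagonal_form x p)
     + (\<Sum>x\<in>diagonals_at_0. (Q x * walpha2 x) * diagonal_form x p)"
  unfolding reduced_form_def diagonals_split
  by (rule sum.union_disjoint) (use finite_diagonals_off_0 finite_diagonals_at_0 diagonals_split_disjoint in auto)

lemma reduced_form_IW2_basis: assumes t: "t \<in> diagonals_at_0" shows "reduced_form (IW2_basis t) p = 0"
proof -
  have t_diag: "t \<in> diagonals" and t_off: "t \<notin> diagonals_off_0"
    using t diagonals_split diagonals_split_disjoint by auto
  have "(\<Sum>x\<in>diagonals_at_0. (IW2_basis t x * walpha2 x) * diagonal_form x p) =
      (\<Sum>x\<in>diagonals_at_0. if x = t then walpha2 t * diagonal_form t p else 0)"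
    by (rule sum.cong) (auto simp: IW2_basis_at_0 t)
  also have "\<dots> = walpha2 t * diagonal_form t p" using t finite_diagonals_at_0 by simp
  moreover have "(\<Sum>x\<in>diagonals_off_0. (IW2_basis t x * walpha2 x) * diagonal_form x p) =
      - (walpha2 t * (\<Sum>x\<in>diagonals_off_0. expansion_coeffs t x * diagonal_form x p))"
    unfolding sum_distrib_left sum_negf[symmetric]
  proof (rule sum.cong)
    fix x assume x: "x \<in> diagonals_off_0"
    then have "walpha2 x \<noteq> 0" "x \<noteq> t" using walpha2_nonzero t_off diagonals_split by auto
    then show "(IW2_basis t x * walpha2 x) * diagonal_form x p =
        - (walpha2 t * (expansion_coeffs t x * diagonal_form x p))"
      using x by (simp add: IW2_basis_def field_simps)
  qed simp
  ultimately show ?thesis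
    by (simp add: reduced_form_split diagonal_form_eq_expansion[OF t_diag, symmetric])
qed

lemma IW2_basis_in_IW2: "t \<in> diagonals_at_0 \<Longrightarrow> IW2_basis t \<in> IW2 v d"
  unfolding IW2_iff using reduced_form_IW2_basis diagonals_split
  by (auto simp: IW2_basis_def)

lemma IW2_eq_0_if_vanishes_at_0:
  assumes Q: "Q \<in> IW2 v d" and at_0: "\<And>t. t \<in> diagonals_at_0 \<Longrightarrow> Q t = 0"
  shows "Q = 0"
proof
  fix x
  show "Q x = 0 x"
  proof (cases "x \<in> diagonals_off_0")
    case True
    have "reduced_form Q p = 0" for p using Q IW2_iff by blast
    then have "(\<Sum>y\<in>diagonals_off_0. (Q y * walpha2 y) * diagonal_form y p) = 0" for p
      using at_0 by (simp add: reduced_form_split)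
    then have "Q x * walpha2 x = 0"
      using diagonal_forms_off_0_scalars_zero[of "\<lambda>y. Q y * walpha2 y"] True by blast
    then show ?thesis using walpha2_nonzero True diagonals_split by auto
  next
    case False
    then show ?thesis
      using at_0[of x] IW2_support[OF Q, of x] diagonals_split by (cases "x \<in> diagonals_at_0") auto
  qed
qed

lemma inj_on_IW2_basis: "inj_on IW2_basis diagonals_at_0"
  by (rule inj_onI) (metis IW2_basis_at_0 zero_neq_one)

lemma IW2_basis_independent: "CS.independent (IW2_basis ` diagonals_at_0)"
proof (rule CS.independent_if_scalars_zero)
  fix f B assume sum: "(\<Sum>B\<in>IW2_basis ` diagonals_at_0. coeff_scale (f B) B) = 0"
    and B: "B \<in> IW2_basis ` diagonals_at_0"
  then obtain t where t: "t \<in> diagonals_at_0" "B = IW2_basis t" by blast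
  have "0 = (\<Sum>s\<in>diagonals_at_0. f (IW2_basis s) * IW2_basis s t)"
    using fun_cong[OF sum, of t]
    by (simp add: sum.reindex[OF inj_on_IW2_basis] sum_apply coeff_scale_def)
  also have "\<dots> = f B" using sum_IW2_basis_at_0[OF t(1)] t(2) by simp
  finally show "f B = 0" ..
qed (use finite_diagonals_at_0 in simp)

lemma IW2_subset_span_basis: "IW2 v d \<subseteq> CS.span (IW2_basis ` diagonals_at_0)"
proof
  fix Q assume Q: "Q \<in> IW2 v d"
  define B where "B = (\<Sum>t\<in>diagonals_at_0. coeff_scale (Q t) (IW2_basis t))"
  have B_span: "B \<in> CS.span (IW2_basis ` diagonals_at_0)"
    unfolding B_def by (intro CS.span_sum CS.span_scale CS.span_base) auto
  then have "B \<in> IW2 v d"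
    using CS.span_minimal[OF _ IW2_subspace] IW2_basis_in_IW2 by blast
  then have "Q - B \<in> IW2 v d" by (rule CS.subspace_diff[OF IW2_subspace Q])
  moreover have "(Q - B) t = 0" if t: "t \<in> diagonals_at_0" for t
  proof -
    have "B t = (\<Sum>s\<in>diagonals_at_0. Q s * IW2_basis s t)"
      by (simp add: B_def sum_apply coeff_scale_def)
    also have "\<dots> = Q t" by (rule sum_IW2_basis_at_0[OF t])
    finally show ?thesis by simp
  qed
  ultimately have "Q = B" using IW2_eq_0_if_vanishes_at_0 by (metis right_minus_eq)
  with B_span show "Q \<in> CS.span (IW2_basis ` diagonals_at_0)" by simp
qed

end

theorem lemma3p5:
  fixes v :: "nat \<Rightarrow> 'a::linordered_field \<times> 'a" and d :: nat
  assumes "4 \<le> d"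
    and "convex_polygon v d"
    and "no_three_concurrent v d"
  shows "vector_space.dim coeff_scale (IW2 v d) = d - 3"
proof -
  interpret wachspress_polygon v d using assms by unfold_locales
  show ?thesis
  proof (rule CS.dim_unique)
    show "IW2_basis ` diagonals_at_0 \<subseteq> IW2 v d" using IW2_basis_in_IW2 by blast
    show "card (IW2_basis ` diagonals_at_0) = d - 3"
      by (simp add: card_image[OF inj_on_IW2_basis] card_diagonals_at_0)
  qed (rule IW2_subset_span_basis, rule IW2_basis_independent)
qed

end
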